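(* Let $T>0$ and let $(X^N)_{N\ge1}$ be a sequence of real-valued stochastic processes with càdlàg paths on $[0,T]$. Suppose that $\sup_{N\ge1}\mathbb E[(X^N(0))^2+(X^N(T))^2]<\infty$, and that there exist $\alpha>1/2$, $\beta>1/2$ and a nondecreasing continuous function $G$ with $G(0)=0$ such that for all $0\le r\le s\le t\le T$, all $N\ge1$ and all $\lambda>0$, $$\mathbb P\big(|X^N(s)-X^N(r)|\wedge|X^N(t)-X^N(s)|\ge\lambda\big)\le\frac{[G(t)-G(r)]^{2\alpha}}{\lambda^{4\beta}}.$$ Then $\sup_{N\ge1}\mathbb E\big[\sup_{0\le t\le T}|X^N(t)|^2\big]<\infty$. *)

theory Defs
  imports "HOL-Probability.Probability"
begin

definition cadlag_on :: "real \<Rightarrow> (real \<Rightarrow> real) \<Rightarrow> bool" where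
  "cadlag_on T f \<longleftrightarrow>
     (\<forall>t\<in>{0..<T}. (f \<longlongrightarrow> f t) (at_right t)) \<and>
     (\<forall>t\<in>{0<..T}. \<exists>l. (f \<longlongrightarrow> l) (at_left t))"

end

theory Submission
  imports Defs
begin

text \<open>For a finite set F of times with endpoints a = Min F and b = Max F, let osc X F be the
largest min(|X s - X a|, |X b - X s|), s \<in> F. Cutting F where G crosses the midpoint of
[G a, G b] and bounding the two bridging increments by the hypothesis gives, by induction on F,
the maximal inequality P(osc X F \<ge> l) \<le> K (G b - G a)^(2\<alpha>) / l^(4\<beta>) (Billingsley's argument).
Since 4\<beta> > 2, summing this tail bound over dyadic levels bounds E[(osc X F)^2] uniformly in F,
and |X s| \<le> |X a| + |X b| + osc X F then controls E[max_F |X|^2] by 3 E[X(0)^2 + X(T)^2] plus a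
constant. Right-continuity of the paths passes from finite sets of rational times to [0,T] by
monotone convergence.\<close>

definition min_increment :: "(real \<Rightarrow> 'w \<Rightarrow> real) \<Rightarrow> real \<Rightarrow> real \<Rightarrow> real \<Rightarrow> 'w \<Rightarrow> real" where
  "min_increment X r s t \<omega> = min \<bar>X s \<omega> - X r \<omega>\<bar> \<bar>X t \<omega> - X s \<omega>\<bar>"

definition osc :: "(real \<Rightarrow> 'w \<Rightarrow> real) \<Rightarrow> real set \<Rightarrow> 'w \<Rightarrow> real" where
  "osc X F \<omega> = (MAX s\<in>F. min_increment X (Min F) s (Max F) \<omega>)"

lemma min_increment_le_right:
  "min_increment X r s t \<omega> \<le> min_increment X r s u \<omega> + min_increment X r u t \<omega>"
  unfolding min_increment_def min_def by (smt (verit))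

lemma min_increment_le_left:
  "min_increment X r s t \<omega> \<le> min_increment X u s t \<omega> + min_increment X r u t \<omega>"
  unfolding min_increment_def min_def by (smt (verit))

lemma min_increment_measurable [measurable]:
  assumes "X r \<in> borel_measurable M" "X s \<in> borel_measurable M" "X t \<in> borel_measurable M"
  shows "min_increment X r s t \<in> borel_measurable M"
  unfolding min_increment_def[abs_def] using assms by measurable

lemma min_increment_le_osc:
  "finite F \<Longrightarrow> s \<in> F \<Longrightarrow> min_increment X (Min F) s (Max F) \<omega> \<le> osc X F \<omega>"
  unfolding osc_def by (rule Max_ge) auto

lemma osc_nonneg: "finite F \<Longrightarrow> F \<noteq> {} \<Longrightarrow> 0 \<le> osc X F \<omega>"
  unfolding osc_def min_increment_def by (auto simp: Max_ge_iff)

lemma osc_eq_0: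
  assumes "finite F" "F \<noteq> {}" "Min F = Max F"
  shows "osc X F \<omega> = 0"
proof -
  have "s = Min F" if "s \<in> F" for s
    using assms that by (metis Max_ge Min_le antisym)
  then show ?thesis
    unfolding osc_def min_increment_def using assms by (simp cong: image_cong)
qed

lemma osc_measurable:
  assumes "\<And>t. t \<in> F \<Longrightarrow> X t \<in> borel_measurable M" and "finite F" "F \<noteq> {}"
  shows "osc X F \<in> borel_measurable M"
proof -
  have "Min F \<in> F" "Max F \<in> F" using assms(2,3) by auto
  then show ?thesis
    unfolding osc_def[abs_def] using assms
    by (intro borel_measurable_Max min_increment_measurable) auto
qed

lemma Min_Max_Un_ordered:
  fixes F1 F2 :: "'a::linorder set"
  assumes "finite F1" "finite F2" "F1 \<noteq> {}" "F2 \<noteq> {}" "\<forall>s\<in>F1. \<forall>t\<in>F2. s < t"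
  shows "Min (F1 \<union> F2) = Min F1" "Max (F1 \<union> F2) = Max F2"
  using assms by (auto simp: Min_Un Max_Un min_def max_def not_le dest: less_asym)

lemma osc_Un_le:
  assumes "finite F1" "finite F2" "F1 \<noteq> {}" "F2 \<noteq> {}" "\<forall>s\<in>F1. \<forall>t\<in>F2. s < t"
  shows "osc X (F1 \<union> F2) \<omega> \<le>
    max (osc X F1 \<omega> + min_increment X (Min F1) (Max F1) (Max F2) \<omega>)
        (osc X F2 \<omega> + min_increment X (Min F1) (Min F2) (Max F2) \<omega>)" (is "_ \<le> ?bound")
proof -
  have "min_increment X (Min F1) s (Max F2) \<omega> \<le> ?bound" if "s \<in> F1 \<union> F2" for s
  proof (cases "s \<in> F1")
    case True
    then have "min_increment X (Min F1) s (Max F1) \<omega> \<le> osc X F1 \<omega>"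
      using assms(1) by (rule min_increment_le_osc[rotated])
    then show ?thesis
      using min_increment_le_right[of X "Min F1" s "Max F2" \<omega> "Max F1"] by linarith
  next
    case False
    then have "min_increment X (Min F2) s (Max F2) \<omega> \<le> osc X F2 \<omega>"
      using that assms(2) by (intro min_increment_le_osc) auto
    then show ?thesis
      using min_increment_le_left[of X "Min F1" s "Max F2" \<omega> "Min F2"] by linarith
  qed
  then show ?thesis
    unfolding osc_def[of X "F1 \<union> F2"] Min_Max_Un_ordered[OF assms] using assms
    by (simp add: Max_le_iff)
qed

text \<open>Keeping Max F out of the lower part makes both parts nonempty even where G is constant.\<close>

lemma mono_on_balanced_split:
  fixes G :: "real \<Rightarrow> real"
  assumes G: "mono_on I G" and F: "finite F" "F \<subseteq> I" "F \<noteq> {}" and ab: "Min F < Max F"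
  obtains F1 F2 where "F = F1 \<union> F2" "F1 \<noteq> {}" "F2 \<noteq> {}" "\<forall>s\<in>F1. \<forall>t\<in>F2. s < t"
    "G (Max F1) - G (Min F) \<le> (G (Max F) - G (Min F)) / 2"
    "G (Max F) - G (Min F2) \<le> (G (Max F) - G (Min F)) / 2"
proof -
  define a b where "a = Min F" and "b = Max F"
  define u where "u = G b - G a"
  define F1 where "F1 = {t \<in> F. t < b \<and> G t - G a \<le> u / 2}"
  define F2 where "F2 = F - F1"
  have aF: "a \<in> F" and bF: "b \<in> F" using F by (simp_all add: a_def b_def)
  have bounds: "a \<le> t" "t \<le> b" if "t \<in> F" for t using F that by (simp_all add: a_def b_def)
  have GF: "G s \<le> G t" if "s \<in> F" "t \<in> F" "s \<le> t" for s t
    using that F(2) by (intro mono_onD[OF G]) auto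
  have "0 \<le> u" using GF[OF aF bF] ab by (simp add: u_def a_def b_def)
  then have "a \<in> F1" using aF ab by (simp add: F1_def a_def b_def)
  moreover have "b \<in> F2" using bF by (simp add: F1_def F2_def)
  moreover have ordered: "\<forall>s\<in>F1. \<forall>t\<in>F2. s < t"
    using GF bounds by (force simp: F1_def F2_def not_less)
  moreover have "G (Max F1) - G a \<le> u / 2"
  proof -
    have "Max F1 \<in> F1" using F \<open>a \<in> F1\<close> by (intro Max_in) (auto simp: F1_def)
    then show ?thesis by (simp add: F1_def)
  qed
  moreover have "G b - G (Min F2) \<le> u / 2"
  proof -
    have "Min F2 \<in> F2" using F \<open>b \<in> F2\<close> by (intro Min_in) (auto simp: F2_def)
    then show ?thesis
      using GF[OF _ bF] bounds \<open>0 \<le> u\<close> by (force simp: F1_def F2_def u_def not_less)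
  qed
  moreover have "F = F1 \<union> F2" by (auto simp: F1_def F2_def)
  ultimately show ?thesis by (intro that) (auto simp: a_def b_def u_def)
qed

text \<open>With \<rho> = osc_ratio \<alpha> = 2^(1 - 2\<alpha>) < 1, a threshold l is shared as (1 - \<theta>) l for the two
halves of F and \<theta> l for the two bridging increments. Choosing (1 - \<theta>)^(4\<beta>) = 2\<rho> / (1 + \<rho>) and
K = 4 / (\<theta>^(4\<beta>) (1 - \<rho>)) makes the induction close exactly, see osc_const_recursion.\<close>

definition osc_ratio :: "real \<Rightarrow> real" where
  "osc_ratio \<alpha> = 2 powr (1 - 2 * \<alpha>)"

definition osc_share :: "real \<Rightarrow> real \<Rightarrow> real" where
  "osc_share \<alpha> \<beta> = 1 - (2 * osc_ratio \<alpha> / (1 + osc_ratio \<alpha>)) powr (1 / (4 * \<beta>))"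

definition osc_const :: "real \<Rightarrow> real \<Rightarrow> real" where
  "osc_const \<alpha> \<beta> = 4 / (osc_share \<alpha> \<beta> powr (4 * \<beta>) * (1 - osc_ratio \<alpha>))"

lemma osc_ratio_bounds: "\<alpha> > 1/2 \<Longrightarrow> 0 < osc_ratio \<alpha> \<and> osc_ratio \<alpha> < 1"
  unfolding osc_ratio_def by (auto intro: powr_less_one)

lemma osc_share_bounds:
  assumes "\<alpha> > 1/2" "\<beta> > 0"
  shows "0 < osc_share \<alpha> \<beta>" "osc_share \<alpha> \<beta> < 1"
proof -
  define \<rho> where "\<rho> = osc_ratio \<alpha>"
  have \<rho>: "0 < \<rho>" "\<rho> < 1" using osc_ratio_bounds[OF assms(1)] by (simp_all add: \<rho>_def)
  have "0 < 2 * \<rho> / (1 + \<rho>)" "2 * \<rho> / (1 + \<rho>) < 1" using \<rho> by (simp_all add: field_simps)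
  then have "0 < (2 * \<rho> / (1 + \<rho>)) powr (1 / (4 * \<beta>))" "(2 * \<rho> / (1 + \<rho>)) powr (1 / (4 * \<beta>)) < 1"
    using assms(2) powr_less_mono2[of "1 / (4 * \<beta>)" "2 * \<rho> / (1 + \<rho>)" 1] by auto
  then show "0 < osc_share \<alpha> \<beta>" "osc_share \<alpha> \<beta> < 1" by (simp_all add: osc_share_def \<rho>_def)
qed

lemma osc_const_pos: "\<alpha> > 1/2 \<Longrightarrow> \<beta> > 0 \<Longrightarrow> 0 < osc_const \<alpha> \<beta>"
  using osc_ratio_bounds[of \<alpha>] osc_share_bounds[of \<alpha> \<beta>] by (simp add: osc_const_def)

lemma osc_const_recursion:
  fixes \<alpha> \<beta> :: real
  defines "K \<equiv> osc_const \<alpha> \<beta>" and "\<theta> \<equiv> osc_share \<alpha> \<beta>"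
  assumes \<alpha>: "\<alpha> > 1/2" and \<beta>: "\<beta> > 0" and l: "l > 0"
    and u1: "0 \<le> u1" "u1 \<le> u / 2" and u2: "0 \<le> u2" "u2 \<le> u / 2"
  shows "K * u1 powr (2 * \<alpha>) / ((1 - \<theta>) * l) powr (4 * \<beta>)
       + K * u2 powr (2 * \<alpha>) / ((1 - \<theta>) * l) powr (4 * \<beta>)
       + 2 * (u powr (2 * \<alpha>) / (\<theta> * l) powr (4 * \<beta>))
       \<le> K * u powr (2 * \<alpha>) / l powr (4 * \<beta>)"
proof -
  define \<rho> where "\<rho> = osc_ratio \<alpha>"
  define P L where "P = u powr (2 * \<alpha>)" and "L = l powr (4 * \<beta>)"
  have \<rho>: "0 < \<rho>" "\<rho> < 1" using osc_ratio_bounds[OF \<alpha>] by (simp_all add: \<rho>_def)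
  have \<theta>: "0 < \<theta>" "\<theta> < 1" using osc_share_bounds[OF \<alpha> \<beta>] by (simp_all add: \<theta>_def)
  have L: "0 < L" using l by (simp add: L_def)
  have half: "(u / 2) powr (2 * \<alpha>) = P * \<rho> / 2"
    by (simp add: P_def \<rho>_def osc_ratio_def powr_divide powr_diff)
  have u_half: "v powr (2 * \<alpha>) \<le> P * \<rho> / 2" if "0 \<le> v" "v \<le> u / 2" for v
    using that \<alpha> powr_mono2[of "2 * \<alpha>" v "u / 2"] half by simp
  have "(1 - \<theta>) powr (4 * \<beta>) = (2 * \<rho> / (1 + \<rho>)) powr (1 / (4 * \<beta>) * (4 * \<beta>))"
    unfolding \<theta>_def osc_share_def \<rho>_def[symmetric] by (simp add: powr_powr)
  also have "\<dots> = 2 * \<rho> / (1 + \<rho>)" using \<beta> \<rho> by simp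
  finally have halves: "((1 - \<theta>) * l) powr (4 * \<beta>) = 2 * \<rho> / (1 + \<rho>) * L"
    using \<theta> l by (simp add: powr_mult L_def)
  have bridges: "(\<theta> * l) powr (4 * \<beta>) = \<theta> powr (4 * \<beta>) * L"
    using \<theta> l by (simp add: powr_mult L_def)
  have K: "K * \<theta> powr (4 * \<beta>) * (1 - \<rho>) = 4"
    using \<theta> \<rho> by (simp add: K_def osc_const_def \<theta>_def \<rho>_def field_simps)
  have "K * u1 powr (2 * \<alpha>) / ((1 - \<theta>) * l) powr (4 * \<beta>)
       + K * u2 powr (2 * \<alpha>) / ((1 - \<theta>) * l) powr (4 * \<beta>)
       \<le> 2 * (K * (P * \<rho> / 2) / (2 * \<rho> / (1 + \<rho>) * L))"
  proof -
    have "K * v powr (2 * \<alpha>) / (2 * \<rho> / (1 + \<rho>) * L) \<le> K * (P * \<rho> / 2) / (2 * \<rho> / (1 + \<rho>) * L)"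
      if "0 \<le> v" "v \<le> u / 2" for v
      using u_half[OF that] \<rho> L osc_const_pos[OF \<alpha> \<beta>]
      by (intro divide_right_mono mult_left_mono) (auto simp: K_def)
    from this[OF u1] this[OF u2] show ?thesis unfolding halves by linarith
  qed
  also have "\<dots> = K * P * (1 + \<rho>) / (2 * L)" using \<rho> L by (simp add: field_simps)
  finally have sum_halves: "K * u1 powr (2 * \<alpha>) / ((1 - \<theta>) * l) powr (4 * \<beta>)
       + K * u2 powr (2 * \<alpha>) / ((1 - \<theta>) * l) powr (4 * \<beta>) \<le> K * P * (1 + \<rho>) / (2 * L)" .
  have inv: "1 / \<theta> powr (4 * \<beta>) = K * (1 - \<rho>) / 4" using K \<theta> by (simp add: field_simps)
  have "2 * (P / (\<theta> powr (4 * \<beta>) * L)) = 2 * P * (1 / \<theta> powr (4 * \<beta>)) / L" by simp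
  also have "\<dots> = K * P * (1 - \<rho>) / (2 * L)" unfolding inv by simp
  finally have bridge_terms: "2 * (P / (\<theta> powr (4 * \<beta>) * L)) = K * P * (1 - \<rho>) / (2 * L)" .
  have "K * P * (1 + \<rho>) / (2 * L) + K * P * (1 - \<rho>) / (2 * L) = K * P / L"
    using L by (simp add: field_simps)
  then show ?thesis
    using sum_halves bridge_terms unfolding bridges P_def[symmetric] L_def[symmetric] by linarith
qed

lemma (in prob_space) prob_max_add_ge_le:
  fixes A B C D :: "'a \<Rightarrow> real"
  assumes [measurable]: "A \<in> borel_measurable M" "B \<in> borel_measurable M"
    "C \<in> borel_measurable M" "D \<in> borel_measurable M"
    and "x + y = l"
  shows "prob {\<omega> \<in> space M. l \<le> max (A \<omega> + B \<omega>) (C \<omega> + D \<omega>)}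
    \<le> prob {\<omega> \<in> space M. x \<le> A \<omega>} + prob {\<omega> \<in> space M. x \<le> C \<omega>}
      + prob {\<omega> \<in> space M. y \<le> B \<omega>} + prob {\<omega> \<in> space M. y \<le> D \<omega>}"
proof -
  let ?E = "\<lambda>f c. {\<omega> \<in> space M. c \<le> f \<omega>}"
  have E: "?E f c \<in> events" if "f \<in> borel_measurable M" for f :: "'a \<Rightarrow> real" and c
    using that by measurable
  note events = E[OF assms(1), of x] E[OF assms(3), of x] E[OF assms(2), of y] E[OF assms(4), of y]
  have "prob (?E (\<lambda>\<omega>. max (A \<omega> + B \<omega>) (C \<omega> + D \<omega>)) l)
      \<le> prob (?E A x \<union> ?E C x \<union> ?E B y \<union> ?E D y)"
    using assms(5) events by (intro finite_measure_mono sets.Un) (auto simp: le_max_iff_disj; linarith)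
  also have "\<dots> \<le> prob (?E A x) + prob (?E C x) + prob (?E B y) + prob (?E D y)"
    using events by (smt (verit) measure_Un_le sets.Un)
  finally show ?thesis .
qed

lemma (in prob_space) prob_osc_Un_le:
  fixes X :: "real \<Rightarrow> 'a \<Rightarrow> real"
  assumes meas: "\<And>t. t \<in> F1 \<union> F2 \<Longrightarrow> X t \<in> borel_measurable M"
    and F: "finite F1" "finite F2" "F1 \<noteq> {}" "F2 \<noteq> {}" "\<forall>s\<in>F1. \<forall>t\<in>F2. s < t"
    and "x + y = l"
  shows "prob {\<omega> \<in> space M. l \<le> osc X (F1 \<union> F2) \<omega>}
    \<le> prob {\<omega> \<in> space M. x \<le> osc X F1 \<omega>} + prob {\<omega> \<in> space M. x \<le> osc X F2 \<omega>}
      + prob {\<omega> \<in> space M. y \<le> min_increment X (Min F1) (Max F1) (Max F2) \<omega>}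
      + prob {\<omega> \<in> space M. y \<le> min_increment X (Min F1) (Min F2) (Max F2) \<omega>}"
proof -
  let ?D1 = "min_increment X (Min F1) (Max F1) (Max F2)"
  let ?D2 = "min_increment X (Min F1) (Min F2) (Max F2)"
  have [measurable]: "osc X F1 \<in> borel_measurable M" "osc X F2 \<in> borel_measurable M"
    using F by (auto intro!: osc_measurable meas)
  have "Min F1 \<in> F1" "Max F1 \<in> F1" "Min F2 \<in> F2" "Max F2 \<in> F2" using F by simp_all
  then have [measurable]: "?D1 \<in> borel_measurable M" "?D2 \<in> borel_measurable M"
    by (auto intro!: min_increment_measurable meas)
  have "prob {\<omega> \<in> space M. l \<le> osc X (F1 \<union> F2) \<omega>}
      \<le> prob {\<omega> \<in> space M. l \<le> max (osc X F1 \<omega> + ?D1 \<omega>) (osc X F2 \<omega> + ?D2 \<omega>)}"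
  proof (rule finite_measure_mono)
    show "{\<omega> \<in> space M. l \<le> osc X (F1 \<union> F2) \<omega>}
        \<subseteq> {\<omega> \<in> space M. l \<le> max (osc X F1 \<omega> + ?D1 \<omega>) (osc X F2 \<omega> + ?D2 \<omega>)}"
      using osc_Un_le[OF F, of X] by (auto intro: order_trans)
  qed measurable
  also have "\<dots> \<le> prob {\<omega> \<in> space M. x \<le> osc X F1 \<omega>} + prob {\<omega> \<in> space M. x \<le> osc X F2 \<omega>}
      + prob {\<omega> \<in> space M. y \<le> ?D1 \<omega>} + prob {\<omega> \<in> space M. y \<le> ?D2 \<omega>}"
    by (rule prob_max_add_ge_le) (simp_all add: assms(7))
  finally show ?thesis .
qed

lemma (in prob_space) osc_tail_bound:
  fixes X :: "real \<Rightarrow> 'a \<Rightarrow> real" and G :: "real \<Rightarrow> real"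
  assumes meas: "\<And>t. t \<in> I \<Longrightarrow> X t \<in> borel_measurable M"
    and G: "mono_on I G" and \<alpha>: "\<alpha> > 1/2" and \<beta>: "\<beta> > 0"
    and tight: "\<And>r s t c. r \<in> I \<Longrightarrow> s \<in> I \<Longrightarrow> t \<in> I \<Longrightarrow> r \<le> s \<Longrightarrow> s \<le> t \<Longrightarrow> c > 0 \<Longrightarrow>
      prob {\<omega> \<in> space M. c \<le> min_increment X r s t \<omega>} \<le> (G t - G r) powr (2 * \<alpha>) / c powr (4 * \<beta>)"
    and F: "finite F" "F \<noteq> {}" "F \<subseteq> I" and l: "l > 0"
  shows "prob {\<omega> \<in> space M. l \<le> osc X F \<omega>}
    \<le> osc_const \<alpha> \<beta> * (G (Max F) - G (Min F)) powr (2 * \<alpha>) / l powr (4 * \<beta>)"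
  using F l
proof (induction F arbitrary: l rule: finite_psubset_induct)
  case (psubset F)
  define \<theta> where "\<theta> = osc_share \<alpha> \<beta>"
  have \<theta>: "0 < \<theta>" "\<theta> < 1" using osc_share_bounds[OF \<alpha> \<beta>] by (simp_all add: \<theta>_def)
  show ?case
  proof (cases "Min F = Max F")
    case True
    then have empty: "{\<omega> \<in> space M. l \<le> osc X F \<omega>} = {}"
      using osc_eq_0[OF psubset.hyps psubset.prems(1) True, where X = X] psubset.prems(3) by auto
    show ?thesis unfolding empty using True by simp
  next
    case False
    then have "Min F < Max F" using psubset.hyps psubset.prems(1) by (simp add: order_less_le)
    then obtain F1 F2 where split: "F = F1 \<union> F2" "F1 \<noteq> {}" "F2 \<noteq> {}" "\<forall>s\<in>F1. \<forall>t\<in>F2. s < t"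
      and u1: "G (Max F1) - G (Min F) \<le> (G (Max F) - G (Min F)) / 2"
      and u2: "G (Max F) - G (Min F2) \<le> (G (Max F) - G (Min F)) / 2"
      using mono_on_balanced_split[OF G psubset.hyps psubset.prems(2,1)] by metis
    have fin: "finite F1" "finite F2" using split psubset.hyps by simp_all
    have smaller: "F1 \<subset> F" "F2 \<subset> F" using split by blast+
    note ends = Min_Max_Un_ordered[OF fin split(2-4), folded split(1)]
    have mem: "Min F1 \<in> F1" "Max F1 \<in> F1" "Min F2 \<in> F2" "Max F2 \<in> F2" using fin split by simp_all
    then have in_I: "Min F1 \<in> I" "Max F1 \<in> I" "Min F2 \<in> I" "Max F2 \<in> I"
      using split(1) psubset.prems(2) by auto
    have ordered: "Min F1 \<le> Max F1" "Max F1 \<le> Max F2" "Min F1 \<le> Min F2" "Min F2 \<le> Max F2"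
      using fin mem split(4) by (simp_all add: less_imp_le)
    have "G (Min F1) \<le> G (Max F1)" "G (Min F2) \<le> G (Max F2)"
      using in_I ordered by (auto intro: mono_onD[OF G])
    have "prob {\<omega> \<in> space M. l \<le> osc X F \<omega>}
        \<le> prob {\<omega> \<in> space M. (1 - \<theta>) * l \<le> osc X F1 \<omega>}
        + prob {\<omega> \<in> space M. (1 - \<theta>) * l \<le> osc X F2 \<omega>}
        + prob {\<omega> \<in> space M. \<theta> * l \<le> min_increment X (Min F1) (Max F1) (Max F2) \<omega>}
        + prob {\<omega> \<in> space M. \<theta> * l \<le> min_increment X (Min F1) (Min F2) (Max F2) \<omega>}"
      unfolding split(1)
      by (rule prob_osc_Un_le) (use fin split psubset.prems(2) meas in \<open>auto simp: algebra_simps\<close>)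
    also have "\<dots> \<le> osc_const \<alpha> \<beta> * (G (Max F1) - G (Min F1)) powr (2 * \<alpha>) / ((1 - \<theta>) * l) powr (4 * \<beta>)
        + osc_const \<alpha> \<beta> * (G (Max F2) - G (Min F2)) powr (2 * \<alpha>) / ((1 - \<theta>) * l) powr (4 * \<beta>)
        + (G (Max F2) - G (Min F1)) powr (2 * \<alpha>) / (\<theta> * l) powr (4 * \<beta>)
        + (G (Max F2) - G (Min F1)) powr (2 * \<alpha>) / (\<theta> * l) powr (4 * \<beta>)"
      using smaller split psubset.prems \<theta> in_I ordered by (intro add_mono psubset.IH tight) auto
    also have "\<dots> \<le> osc_const \<alpha> \<beta> * (G (Max F) - G (Min F)) powr (2 * \<alpha>) / l powr (4 * \<beta>)"
      using osc_const_recursion[OF \<alpha> \<beta> psubset.prems(3)] u1 u2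
        \<open>G (Min F1) \<le> G (Max F1)\<close> \<open>G (Min F2) \<le> G (Max F2)\<close>
      unfolding ends \<theta>_def by (smt (verit))
    finally show ?thesis .
  qed
qed

lemma square_le_dyadic_layers:
  fixes x :: real
  assumes "0 \<le> x"
  shows "ennreal (x\<^sup>2) \<le> 1 + (\<Sum>k. ennreal (4 ^ Suc k) * indicator {y. 2 ^ k \<le> y} x)"
proof (cases "x < 1")
  case True
  then have "ennreal (x\<^sup>2) \<le> 1" using assms by (simp add: power_le_one)
  then show ?thesis by (simp add: add_increasing2)
next
  case False
  then have "1 \<le> nat \<lfloor>x\<rfloor>" by (auto simp: not_less le_nat_iff)
  then obtain k where k: "2 ^ k \<le> nat \<lfloor>x\<rfloor>" "nat \<lfloor>x\<rfloor> < 2 ^ (k + 1)"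
    using ex_power_ivl1[of 2 "nat \<lfloor>x\<rfloor>"] by auto
  have "(2::real) ^ k \<le> real (nat \<lfloor>x\<rfloor>)" using k(1) by (metis of_nat_le_iff of_nat_numeral of_nat_power)
  also have "\<dots> \<le> x" using assms by (rule of_nat_floor)
  finally have "(2::real) ^ k \<le> x" .
  have "x < real (nat \<lfloor>x\<rfloor>) + 1" using assms by linarith
  also have "\<dots> \<le> 2 ^ Suc k"
    using k(2) by (metis Suc_eq_plus1 Suc_leI of_nat_1 of_nat_add of_nat_le_iff of_nat_numeral of_nat_power)
  finally have "x < 2 ^ Suc k" .
  then have "x\<^sup>2 \<le> (2 ^ Suc k)\<^sup>2" using assms by (intro power_mono) auto
  also have "\<dots> = 4 ^ Suc k" unfolding power_mult_distrib[symmetric] power2_eq_square by simp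
  finally have "x\<^sup>2 \<le> 4 ^ Suc k" .
  then have "ennreal (x\<^sup>2) \<le> ennreal (4 ^ Suc k) * indicator {y. 2 ^ k \<le> y} x"
    using \<open>2 ^ k \<le> x\<close> by (simp add: ennreal_leI)
  also have "\<dots> \<le> (\<Sum>k. ennreal (4 ^ Suc k) * indicator {y. 2 ^ k \<le> y} x)"
    using sum_le_suminf[OF summableI, of "{k}"] by simp
  finally show ?thesis by (simp add: add_increasing)
qed

lemma (in prob_space) nn_integral_square_le_of_tail:
  fixes f :: "'a \<Rightarrow> real"
  assumes [measurable]: "f \<in> borel_measurable M" and nonneg: "\<And>\<omega>. \<omega> \<in> space M \<Longrightarrow> 0 \<le> f \<omega>"
    and "0 \<le> A" and "p > 2"
    and tail: "\<And>l. l > 0 \<Longrightarrow> prob {\<omega> \<in> space M. l \<le> f \<omega>} \<le> A / l powr p"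
  shows "(\<integral>\<^sup>+\<omega>. ennreal ((f \<omega>)\<^sup>2) \<partial>M) \<le> ennreal (1 + 4 * A / (1 - 4 / 2 powr p))"
proof -
  define r where "r = 4 / 2 powr p"
  have "(2::real) powr 2 < 2 powr p" using \<open>p > 2\<close> by (intro powr_less_mono) auto
  then have r: "0 \<le> r" "r < 1" by (simp_all add: r_def)
  define S where "S k = {\<omega> \<in> space M. 2 ^ k \<le> f \<omega>}" for k :: nat
  have [measurable]: "S k \<in> sets M" for k unfolding S_def by measurable
  have "(\<integral>\<^sup>+\<omega>. ennreal ((f \<omega>)\<^sup>2) \<partial>M)
      \<le> (\<integral>\<^sup>+\<omega>. 1 + (\<Sum>k. ennreal (4 ^ Suc k) * indicator (S k) \<omega>) \<partial>M)"
  proof (rule nn_integral_mono)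
    fix \<omega> assume "\<omega> \<in> space M"
    then have "indicator {y. 2 ^ k \<le> y} (f \<omega>) = (indicator (S k) \<omega> :: ennreal)" for k
      by (simp add: S_def indicator_def)
    then show "ennreal ((f \<omega>)\<^sup>2) \<le> 1 + (\<Sum>k. ennreal (4 ^ Suc k) * indicator (S k) \<omega>)"
      using square_le_dyadic_layers[OF nonneg[OF \<open>\<omega> \<in> space M\<close>]] by simp
  qed
  also have "\<dots> = 1 + (\<Sum>k. ennreal (4 ^ Suc k) * emeasure M (S k))"
    by (simp add: nn_integral_add nn_integral_suminf nn_integral_cmult_indicator emeasure_space_1)
  also have "(\<Sum>k. ennreal (4 ^ Suc k) * emeasure M (S k)) \<le> (\<Sum>k. ennreal (4 * A * r ^ k))"
  proof (intro suminf_le summableI)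
    fix k
    have "((2::real) ^ k) powr p = (2 powr p) ^ k"
      by (simp add: powr_realpow[symmetric] powr_powr powr_power mult.commute)
    then have layer: "4 ^ Suc k * (A / (2 ^ k) powr p) = 4 * A * r ^ k"
      by (simp add: r_def power_divide)
    have "emeasure M (S k) \<le> ennreal (A / (2 ^ k) powr p)"
      using tail[of "2 ^ k"] by (simp add: emeasure_eq_measure S_def ennreal_leI)
    then have "ennreal (4 ^ Suc k) * emeasure M (S k) \<le> ennreal (4 ^ Suc k) * ennreal (A / (2 ^ k) powr p)"
      by (rule mult_left_mono) simp
    also have "\<dots> = ennreal (4 * A * r ^ k)"
      unfolding layer[symmetric] by (rule ennreal_mult[symmetric]) (use \<open>0 \<le> A\<close> in auto)
    finally show "ennreal (4 ^ Suc k) * emeasure M (S k) \<le> ennreal (4 * A * r ^ k)" .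
  qed
  also have "(\<Sum>k. ennreal (4 * A * r ^ k)) = ennreal (4 * A / (1 - r))"
    using r \<open>0 \<le> A\<close>
    by (simp add: suminf_ennreal2 summable_geometric suminf_mult suminf_geometric)
  finally show ?thesis
    using r \<open>0 \<le> A\<close> by (simp add: r_def ennreal_plus[symmetric] add_left_mono)
qed

lemma abs_le_min_increment: "\<bar>X s \<omega>\<bar> \<le> \<bar>X r \<omega>\<bar> + \<bar>X t \<omega>\<bar> + min_increment X r s t \<omega>"
  unfolding min_increment_def by linarith

lemma square_sum3_le:
  fixes a b c :: real
  shows "(a + b + c)\<^sup>2 \<le> 3 * (a\<^sup>2 + b\<^sup>2 + c\<^sup>2)"
proof -
  have "0 \<le> (a - b)\<^sup>2 + (b - c)\<^sup>2 + (a - c)\<^sup>2" by simp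
  then show ?thesis by (simp add: power2_eq_square algebra_simps)
qed

lemma SUP_square_le_osc:
  assumes "finite F" "a \<in> F" "b \<in> F" "F \<subseteq> {a..b}"
  shows "(SUP s\<in>F. ennreal (\<bar>X s \<omega>\<bar>\<^sup>2))
    \<le> 3 * ennreal ((X a \<omega>)\<^sup>2 + (X b \<omega>)\<^sup>2) + 3 * ennreal ((osc X F \<omega>)\<^sup>2)"
proof (rule SUP_least)
  fix s assume "s \<in> F"
  have ends: "Min F = a" "Max F = b"
    using assms by (force intro: Min_eqI, force intro: Max_eqI)
  have "\<bar>X s \<omega>\<bar> \<le> \<bar>X a \<omega>\<bar> + \<bar>X b \<omega>\<bar> + osc X F \<omega>"
    using abs_le_min_increment[of X s \<omega> a b] min_increment_le_osc[OF assms(1) \<open>s \<in> F\<close>, of X \<omega>]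
    unfolding ends by linarith
  then have "\<bar>X s \<omega>\<bar>\<^sup>2 \<le> (\<bar>X a \<omega>\<bar> + \<bar>X b \<omega>\<bar> + osc X F \<omega>)\<^sup>2" by (intro power_mono) auto
  also have "\<dots> \<le> 3 * ((X a \<omega>)\<^sup>2 + (X b \<omega>)\<^sup>2) + 3 * (osc X F \<omega>)\<^sup>2"
    using square_sum3_le[of "\<bar>X a \<omega>\<bar>" "\<bar>X b \<omega>\<bar>" "osc X F \<omega>"] by simp
  finally have "ennreal (\<bar>X s \<omega>\<bar>\<^sup>2) \<le> ennreal (3 * ((X a \<omega>)\<^sup>2 + (X b \<omega>)\<^sup>2) + 3 * (osc X F \<omega>)\<^sup>2)"
    by (rule ennreal_leI)
  then show "ennreal (\<bar>X s \<omega>\<bar>\<^sup>2) \<le> 3 * ennreal ((X a \<omega>)\<^sup>2 + (X b \<omega>)\<^sup>2) + 3 * ennreal ((osc X F \<omega>)\<^sup>2)"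
    by (simp add: ennreal_plus ennreal_mult)
qed

definition sup_moment_const :: "real \<Rightarrow> real \<Rightarrow> real \<Rightarrow> real" where
  "sup_moment_const \<alpha> \<beta> g = 1 + 4 * (osc_const \<alpha> \<beta> * g powr (2 * \<alpha>)) / (1 - 4 / 2 powr (4 * \<beta>))"

lemma (in prob_space) nn_integral_SUP_square_finite_le:
  fixes X :: "real \<Rightarrow> 'a \<Rightarrow> real" and G :: "real \<Rightarrow> real"
  assumes meas: "\<And>t. t \<in> I \<Longrightarrow> X t \<in> borel_measurable M"
    and G: "mono_on I G" and \<alpha>: "\<alpha> > 1/2" and \<beta>: "\<beta> > 1/2"
    and tight: "\<And>r s t c. r \<in> I \<Longrightarrow> s \<in> I \<Longrightarrow> t \<in> I \<Longrightarrow> r \<le> s \<Longrightarrow> s \<le> t \<Longrightarrow> c > 0 \<Longrightarrow>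
      prob {\<omega> \<in> space M. c \<le> min_increment X r s t \<omega>} \<le> (G t - G r) powr (2 * \<alpha>) / c powr (4 * \<beta>)"
    and F: "finite F" "F \<subseteq> I" "a \<in> F" "b \<in> F" "F \<subseteq> {a..b}"
  shows "(\<integral>\<^sup>+\<omega>. (SUP s\<in>F. ennreal (\<bar>X s \<omega>\<bar>\<^sup>2)) \<partial>M)
    \<le> 3 * (\<integral>\<^sup>+\<omega>. ennreal ((X a \<omega>)\<^sup>2 + (X b \<omega>)\<^sup>2) \<partial>M) + 3 * ennreal (sup_moment_const \<alpha> \<beta> (G b - G a))"
proof -
  define Z where "Z = osc X F"
  have ends: "Min F = a" "Max F = b"
    using F by (force intro: Min_eqI, force intro: Max_eqI)
  have [measurable]: "Z \<in> borel_measurable M" "X a \<in> borel_measurable M" "X b \<in> borel_measurable M"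
    using F unfolding Z_def by (auto intro!: osc_measurable meas)
  have "0 \<le> Z \<omega>" for \<omega> using F osc_nonneg[of F X \<omega>] by (auto simp: Z_def)
  have "0 \<le> osc_const \<alpha> \<beta>" using osc_const_pos[OF \<alpha>, of \<beta>] \<beta> by simp
  have moment: "(\<integral>\<^sup>+\<omega>. ennreal ((Z \<omega>)\<^sup>2) \<partial>M) \<le> ennreal (sup_moment_const \<alpha> \<beta> (G b - G a))"
    unfolding sup_moment_const_def
  proof (rule nn_integral_square_le_of_tail)
    show "prob {\<omega> \<in> space M. l \<le> Z \<omega>} \<le> osc_const \<alpha> \<beta> * (G b - G a) powr (2 * \<alpha>) / l powr (4 * \<beta>)"
      if "l > 0" for l
      using osc_tail_bound[OF meas G \<alpha> _ tight F(1) _ F(2) that] \<beta> F(3)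
      unfolding Z_def ends by fastforce
  qed (use \<beta> \<open>\<And>\<omega>. 0 \<le> Z \<omega>\<close> \<open>0 \<le> osc_const \<alpha> \<beta>\<close> in auto)
  have pointwise: "(SUP s\<in>F. ennreal (\<bar>X s \<omega>\<bar>\<^sup>2))
      \<le> 3 * ennreal ((X a \<omega>)\<^sup>2 + (X b \<omega>)\<^sup>2) + 3 * ennreal ((Z \<omega>)\<^sup>2)" for \<omega>
    unfolding Z_def using F(1,3-5) by (rule SUP_square_le_osc)
  have "(\<integral>\<^sup>+\<omega>. (SUP s\<in>F. ennreal (\<bar>X s \<omega>\<bar>\<^sup>2)) \<partial>M)
      \<le> (\<integral>\<^sup>+\<omega>. 3 * ennreal ((X a \<omega>)\<^sup>2 + (X b \<omega>)\<^sup>2) + 3 * ennreal ((Z \<omega>)\<^sup>2) \<partial>M)"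
    by (intro nn_integral_mono pointwise)
  also have "\<dots> = (\<integral>\<^sup>+\<omega>. 3 * ennreal ((X a \<omega>)\<^sup>2 + (X b \<omega>)\<^sup>2) \<partial>M) + (\<integral>\<^sup>+\<omega>. 3 * ennreal ((Z \<omega>)\<^sup>2) \<partial>M)"
    by (rule nn_integral_add) measurable
  also have "\<dots> = 3 * (\<integral>\<^sup>+\<omega>. ennreal ((X a \<omega>)\<^sup>2 + (X b \<omega>)\<^sup>2) \<partial>M) + 3 * (\<integral>\<^sup>+\<omega>. ennreal ((Z \<omega>)\<^sup>2) \<partial>M)"
    by (intro arg_cong2[where f = "(+)"] nn_integral_cmult) measurable
  finally show ?thesis using moment by (meson add_left_mono mult_left_mono order_trans zero_le)
qed

lemma le_SUP_of_tendsto_at_right: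
  fixes f :: "real \<Rightarrow> 'b::{complete_linorder, linorder_topology}"
  assumes lim: "(f \<longlongrightarrow> f t) (at_right t)"
    and dense: "\<And>e. e > 0 \<Longrightarrow> \<exists>s\<in>D. t < s \<and> s < t + e"
  shows "f t \<le> (SUP s\<in>D. f s)"
proof (rule tendsto_upperbound)
  show "(f \<longlongrightarrow> f t) (at t within ({t<..} \<inter> D))"
    using lim by (rule tendsto_mono[rotated]) (simp add: at_le)
  have "t islimpt ({t<..} \<inter> D)"
    unfolding islimpt_approachable using dense by (fastforce simp: dist_real_def)
  then show "at t within ({t<..} \<inter> D) \<noteq> bot"
    using trivial_limit_within by blast
  show "\<forall>\<^sub>F s in at t within ({t<..} \<inter> D). f s \<le> (SUP s\<in>D. f s)"
    unfolding eventually_at_filter by (rule always_eventually) (auto intro: SUP_upper)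
qed

lemma SUP_eq_SUP_Rats_right_continuous:
  fixes f :: "real \<Rightarrow> 'b::{complete_linorder, linorder_topology}"
  assumes "0 \<le> T" and right_cont: "\<And>t. t \<in> {0..<T} \<Longrightarrow> (f \<longlongrightarrow> f t) (at_right t)"
  shows "(SUP t\<in>{0..T}. f t) = (SUP t\<in>insert T (\<rat> \<inter> {0..T}). f t)"
proof (rule antisym)
  show "(SUP t\<in>{0..T}. f t) \<le> (SUP t\<in>insert T (\<rat> \<inter> {0..T}). f t)"
  proof (rule SUP_least)
    fix t assume t: "t \<in> {0..T}"
    show "f t \<le> (SUP t\<in>insert T (\<rat> \<inter> {0..T}). f t)"
    proof (cases "t = T")
      case False
      have "f t \<le> (SUP s\<in>\<rat> \<inter> {0..T}. f s)"
      proof (rule le_SUP_of_tendsto_at_right)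
        show "(f \<longlongrightarrow> f t) (at_right t)" using right_cont t False by simp
        show "\<exists>s\<in>\<rat> \<inter> {0..T}. t < s \<and> s < t + e" if "e > 0" for e
          using Rats_dense_in_real[of t "min T (t + e)"] that t False by auto
      qed
      then show ?thesis by (simp add: SUP_insert le_supI2)
    qed (simp add: SUP_insert)
  qed
  show "(SUP t\<in>insert T (\<rat> \<inter> {0..T}). f t) \<le> (SUP t\<in>{0..T}. f t)"
    using assms(1) by (intro SUP_subset_mono) auto
qed

lemma (in prob_space) nn_integral_SUP_square_le:
  fixes X :: "real \<Rightarrow> 'a \<Rightarrow> real" and G :: "real \<Rightarrow> real"
  assumes T: "0 \<le> T" and meas: "\<And>t. t \<in> {0..T} \<Longrightarrow> X t \<in> borel_measurable M"
    and right_cont: "\<And>\<omega> t. \<omega> \<in> space M \<Longrightarrow> t \<in> {0..<T} \<Longrightarrow> ((\<lambda>s. X s \<omega>) \<longlongrightarrow> X t \<omega>) (at_right t)"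
    and G: "mono_on {0..T} G" and \<alpha>: "\<alpha> > 1/2" and \<beta>: "\<beta> > 1/2"
    and tight: "\<And>r s t c. 0 \<le> r \<Longrightarrow> r \<le> s \<Longrightarrow> s \<le> t \<Longrightarrow> t \<le> T \<Longrightarrow> c > 0 \<Longrightarrow>
      prob {\<omega> \<in> space M. c \<le> min_increment X r s t \<omega>} \<le> (G t - G r) powr (2 * \<alpha>) / c powr (4 * \<beta>)"
  shows "(\<integral>\<^sup>+\<omega>. (SUP t\<in>{0..T}. ennreal (\<bar>X t \<omega>\<bar>\<^sup>2)) \<partial>M)
    \<le> 3 * (\<integral>\<^sup>+\<omega>. ennreal ((X 0 \<omega>)\<^sup>2 + (X T \<omega>)\<^sup>2) \<partial>M) + 3 * ennreal (sup_moment_const \<alpha> \<beta> (G T - G 0))"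
    (is "_ \<le> ?bound")
proof -
  define Q where "Q = \<rat> \<inter> {0..T}"
  define F where "F n = insert 0 (insert T (from_nat_into Q ` {..n}))" for n
  define h where "h n \<omega> = (SUP s\<in>F n. ennreal (\<bar>X s \<omega>\<bar>\<^sup>2))" for n \<omega>
  have "0 \<in> Q" using T by (simp add: Q_def)
  moreover have "countable Q" by (simp add: Q_def countable_rat)
  ultimately have range_Q: "range (from_nat_into Q) = Q" by (intro range_from_nat_into) auto
  have F: "finite (F n)" "F n \<subseteq> {0..T}" "0 \<in> F n" "T \<in> F n" for n
    using range_Q T by (auto simp: F_def Q_def)
  have "incseq F" by (auto simp: F_def incseq_def)
  then have "incseq h" unfolding h_def incseq_def by (auto intro!: le_funI SUP_subset_mono)
  have h_measurable: "h n \<in> borel_measurable M" for n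
    unfolding h_def
  proof (rule borel_measurable_SUP)
    show "countable (F n)" using F(1) by (rule countable_finite)
    fix s assume "s \<in> F n"
    then have [measurable]: "X s \<in> borel_measurable M" using F(2) meas by blast
    show "(\<lambda>\<omega>. ennreal (\<bar>X s \<omega>\<bar>\<^sup>2)) \<in> borel_measurable M" by measurable
  qed
  have Q_covered: "insert T Q \<subseteq> (\<Union>n. F n)"
  proof (intro subsetI)
    fix s assume "s \<in> insert T Q"
    then obtain m where "s = T \<or> s = from_nat_into Q m" using range_Q by blast
    then show "s \<in> (\<Union>n. F n)" by (auto simp: F_def)
  qed
  have sup_le: "(SUP t\<in>{0..T}. ennreal (\<bar>X t \<omega>\<bar>\<^sup>2)) \<le> (SUP n. h n \<omega>)" if "\<omega> \<in> space M" for \<omega>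
  proof -
    have "(SUP t\<in>{0..T}. ennreal (\<bar>X t \<omega>\<bar>\<^sup>2)) = (SUP s\<in>insert T Q. ennreal (\<bar>X s \<omega>\<bar>\<^sup>2))"
      unfolding Q_def using T right_cont[OF that]
      by (intro SUP_eq_SUP_Rats_right_continuous) (auto intro!: tendsto_intros)
    also have "\<dots> \<le> (SUP s\<in>(\<Union>n. F n). ennreal (\<bar>X s \<omega>\<bar>\<^sup>2))"
      using Q_covered by (rule SUP_subset_mono) simp
    also have "\<dots> = (SUP n. h n \<omega>)" by (simp add: h_def SUP_UNION)
    finally show ?thesis .
  qed
  have "(\<integral>\<^sup>+\<omega>. (SUP t\<in>{0..T}. ennreal (\<bar>X t \<omega>\<bar>\<^sup>2)) \<partial>M) \<le> (\<integral>\<^sup>+\<omega>. (SUP n. h n \<omega>) \<partial>M)"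
    by (intro nn_integral_mono sup_le)
  also have "\<dots> = (SUP n. integral\<^sup>N M (h n))"
    using \<open>incseq h\<close> h_measurable by (rule nn_integral_monotone_convergence_SUP)
  also have "\<dots> \<le> ?bound"
  proof (rule SUP_least)
    fix n
    show "integral\<^sup>N M (h n) \<le> ?bound"
      unfolding h_def
      by (rule nn_integral_SUP_square_finite_le[OF meas G \<alpha> \<beta> _ F(1,2,3,4)])
        (use tight in \<open>auto simp: F\<close>)
  qed
  finally show ?thesis .
qed

theorem theorem3p1:
  fixes T :: real
    and M :: "nat \<Rightarrow> 'w measure"
    and X :: "nat \<Rightarrow> real \<Rightarrow> 'w \<Rightarrow> real"
    and G :: "real \<Rightarrow> real"
    and \<alpha> \<beta> :: real
  assumes T_pos: "T > 0"
    and prob: "\<And>N. N \<ge> 1 \<Longrightarrow> prob_space (M N)"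
    and meas: "\<And>N t. N \<ge> 1 \<Longrightarrow> t \<in> {0..T} \<Longrightarrow> X N t \<in> borel_measurable (M N)"
    and cadlag: "\<And>N \<omega>. N \<ge> 1 \<Longrightarrow> \<omega> \<in> space (M N) \<Longrightarrow> cadlag_on T (\<lambda>t. X N t \<omega>)"
    and moments: "(SUP N\<in>{1..}. \<integral>\<^sup>+ \<omega>. ennreal ((X N 0 \<omega>)\<^sup>2 + (X N T \<omega>)\<^sup>2) \<partial>M N) < \<infinity>"
    and alpha: "\<alpha> > 1/2" and beta: "\<beta> > 1/2"
    and G_mono: "mono_on {0..T} G" and G_cont: "continuous_on {0..T} G" and G0: "G 0 = 0"
    and tight: "\<And>N r s t c. N \<ge> 1 \<Longrightarrow> 0 \<le> r \<Longrightarrow> r \<le> s \<Longrightarrow> s \<le> t \<Longrightarrow> t \<le> T \<Longrightarrow> c > 0 \<Longrightarrow>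
        measure (M N) {\<omega> \<in> space (M N). min \<bar>X N s \<omega> - X N r \<omega>\<bar> \<bar>X N t \<omega> - X N s \<omega>\<bar> \<ge> c}
          \<le> (G t - G r) powr (2 * \<alpha>) / c powr (4 * \<beta>)"
  shows "(SUP N\<in>{1..}. \<integral>\<^sup>+ \<omega>. (SUP t\<in>{0..T}. ennreal (\<bar>X N t \<omega>\<bar>\<^sup>2)) \<partial>M N) < \<infinity>"
proof -
  define C where "C = sup_moment_const \<alpha> \<beta> (G T - G 0)"
  define m where "m = (SUP N\<in>{1..}. \<integral>\<^sup>+ \<omega>. ennreal ((X N 0 \<omega>)\<^sup>2 + (X N T \<omega>)\<^sup>2) \<partial>M N)"
  have "(\<integral>\<^sup>+ \<omega>. (SUP t\<in>{0..T}. ennreal (\<bar>X N t \<omega>\<bar>\<^sup>2)) \<partial>M N) \<le> 3 * m + 3 * ennreal C"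
    if N: "N \<ge> 1" for N
  proof -
    interpret prob_space "M N" using prob[OF N] .
    have "(\<integral>\<^sup>+ \<omega>. (SUP t\<in>{0..T}. ennreal (\<bar>X N t \<omega>\<bar>\<^sup>2)) \<partial>M N)
        \<le> 3 * (\<integral>\<^sup>+ \<omega>. ennreal ((X N 0 \<omega>)\<^sup>2 + (X N T \<omega>)\<^sup>2) \<partial>M N) + 3 * ennreal C"
      unfolding C_def
    proof (rule nn_integral_SUP_square_le)
      show "((\<lambda>s. X N s \<omega>) \<longlongrightarrow> X N t \<omega>) (at_right t)" if "\<omega> \<in> space (M N)" "t \<in> {0..<T}" for \<omega> t
        using cadlag[OF N that(1)] that(2) unfolding cadlag_on_def by blast
    qed (use T_pos meas[OF N] G_mono alpha beta tight[OF N] in \<open>auto simp: min_increment_def\<close>)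
    also have "\<dots> \<le> 3 * m + 3 * ennreal C"
      unfolding m_def using N by (intro add_right_mono mult_left_mono SUP_upper) auto
    finally show ?thesis .
  qed
  then have "(SUP N\<in>{1..}. \<integral>\<^sup>+ \<omega>. (SUP t\<in>{0..T}. ennreal (\<bar>X N t \<omega>\<bar>\<^sup>2)) \<partial>M N) \<le> 3 * m + 3 * ennreal C"
    by (intro SUP_least) auto
  also have "\<dots> < \<infinity>"
    using moments by (simp add: m_def ennreal_add_less_top ennreal_mult_less_top)
  finally show ?thesis .
qed

end
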